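(* Let $\gamma=[0;1,1,c_3,1,c_5,1,c_7,1,\dots]$, i.e. $\gamma$ has infinite continued fraction expansion $[c_0;c_1,c_2,\dots]$ with $c_0=0$, $c_n=1$ for $n$ even $\ge2$ and for $n=1$, and $c_{2n+1}\in\{1,2\}$ for all $n\in\mathbb{N}$. Then for every $m\in\mathbb{N}$, $$\frac{2}{\pi}m\tan\left(\frac{\pi}{2}\left(m\gamma^{-1}-\lfloor m\gamma^{-1}\rfloor\right)\right)>\frac{1}{3}.$$
   Context: $[c_0;c_1,c_2,\dots]$ denotes the continued fraction $c_0+\cfrac{1}{c_1+\cfrac{1}{c_2+\cdots}}$. $\mathbb{N}=\{1,2,\dots\}$. *)

theory Defs
  imports Complex_Main
begin

primrec cf_conv :: "nat \<Rightarrow> (nat \<Rightarrow> nat) \<Rightarrow> real" where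
  "cf_conv 0 c = real (c 0)"
| "cf_conv (Suc n) c = real (c 0) + 1 / cf_conv n (\<lambda>k. c (Suc k))"

definition has_cfrac :: "real \<Rightarrow> (nat \<Rightarrow> nat) \<Rightarrow> bool" where
  "has_cfrac x c \<longleftrightarrow> (\<forall>n\<ge>1. c n \<ge> 1) \<and> (\<lambda>n. cf_conv n c) \<longlonglongrightarrow> x"

end

theory Submission
  imports Defs "HOL-Analysis.Analysis"
begin

(* Write a = 1/\<gamma> = [1; 1, c_3, 1, c_5, ...]. Peeling off three partial quotients gives
   a = 2 - 1/(a' + k) with k = c_3 and a' = [1; 1, c_5, 1, c_7, ...] of the same shape, and
   every such number lies in [3/2, 2).  If m a = n + \<delta> with 0 \<le> \<delta> < 1 and n > m, then
   m' = 2m - n < m satisfies m' a' = n' + u \<delta> with u = a' + k \<ge> 5/2, and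
   m \<delta> = m' (u \<delta>) - (u \<delta>)^2 / u.  Hence m \<delta> > 1/3 + \<delta>^2/2 follows by descent on m: the
   term \<delta>^2/2 absorbs the loss (u \<delta>)^2 / u because u^2 - 2u \<ge> 1.  The theorem then follows
   from tan x \<ge> x. *)

lemma cf_conv_bounds:
  assumes "\<And>k. k \<ge> 1 \<Longrightarrow> c k \<ge> 1"
  shows "real (c 0) \<le> cf_conv n c \<and> cf_conv n c \<le> real (c 0) + 1"
  using assms
proof (induction n arbitrary: c)
  case 0
  then show ?case by simp
next
  case (Suc n)
  have "real (c 1) \<le> cf_conv n (\<lambda>k. c (Suc k))"
    using Suc.IH[of "\<lambda>k. c (Suc k)"] Suc.prems by auto
  moreover have "1 \<le> real (c 1)"
    using Suc.prems[of 1] by simp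
  ultimately have "1 \<le> cf_conv n (\<lambda>k. c (Suc k))"
    by linarith
  then show ?case
    by (simp add: field_simps)
qed

lemma has_cfrac_ge_first:
  assumes "has_cfrac x c"
  shows "real (c 0) \<le> x"
  using assms cf_conv_bounds unfolding has_cfrac_def
  by (metis (no_types, lifting) LIMSEQ_le_const)

lemma has_cfrac_tail:
  assumes "has_cfrac x c"
  obtains y where "has_cfrac y (\<lambda>k. c (Suc k))" and "x = real (c 0) + 1 / y"
proof -
  define t where "t n = cf_conv n (\<lambda>k. c (Suc k))" for n
  have c_ge: "\<And>k. k \<ge> 1 \<Longrightarrow> c k \<ge> 1"
    using assms by (simp add: has_cfrac_def)
  have c1: "1 \<le> real (c 1)"
    using c_ge[of 1] by simp
  have "real (c 1) \<le> t n \<and> t n \<le> real (c 1) + 1" for n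
    using cf_conv_bounds[of "\<lambda>k. c (Suc k)" n] c_ge unfolding t_def by simp
  then have t_bounds: "1 \<le> t n \<and> t n \<le> real (c 1) + 1" for n
    using c1 by (meson order_trans)
  have "(\<lambda>n. cf_conv (Suc n) c) \<longlonglongrightarrow> x"
    using assms by (intro LIMSEQ_Suc) (simp add: has_cfrac_def)
  then have "(\<lambda>n. real (c 0) + 1 / t n - real (c 0)) \<longlonglongrightarrow> x - real (c 0)"
    unfolding t_def by (intro tendsto_diff) auto
  then have inv_lim: "(\<lambda>n. 1 / t n) \<longlonglongrightarrow> x - real (c 0)"
    by simp
  have "1 / (real (c 1) + 1) \<le> 1 / t n" for n
    using t_bounds[of n] by (intro divide_left_mono) auto
  then have "1 / (real (c 1) + 1) \<le> x - real (c 0)"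
    by (intro LIMSEQ_le_const[OF inv_lim]) auto
  moreover have "0 < 1 / (real (c 1) + 1)"
    by simp
  ultimately have pos: "x - real (c 0) > 0"
    by linarith
  have "(\<lambda>n. 1 / (1 / t n)) \<longlonglongrightarrow> 1 / (x - real (c 0))"
    using pos by (intro tendsto_divide inv_lim) auto
  then have "t \<longlonglongrightarrow> 1 / (x - real (c 0))"
    by simp
  then have "has_cfrac (1 / (x - real (c 0))) (\<lambda>k. c (Suc k))"
    using c_ge unfolding has_cfrac_def t_def by auto
  then show thesis
    using that pos by simp
qed

lemma has_cfrac_Cons:
  assumes "has_cfrac y c" and "c 0 \<ge> 1"
  shows "has_cfrac (real j + 1 / y) (case_nat j c)"
proof -
  have "1 \<le> y"
    using has_cfrac_ge_first[OF assms(1)] assms(2) by linarith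
  moreover have "(\<lambda>n. cf_conv n c) \<longlonglongrightarrow> y"
    using assms(1) by (simp add: has_cfrac_def)
  ultimately have "(\<lambda>n. real j + 1 / cf_conv n c) \<longlonglongrightarrow> real j + 1 / y"
    by (intro tendsto_add tendsto_const tendsto_divide) auto
  then have "(\<lambda>n. cf_conv (Suc n) (case_nat j c)) \<longlonglongrightarrow> real j + 1 / y"
    by simp
  then have "(\<lambda>n. cf_conv n (case_nat j c)) \<longlonglongrightarrow> real j + 1 / y"
    by (rule LIMSEQ_imp_Suc)
  moreover have "case_nat j c n \<ge> 1" if "n \<ge> 1" for n
  proof (cases n)
    case (Suc i)
    then show ?thesis
      using assms unfolding has_cfrac_def by (cases i) auto
  qed (use that in simp)
  ultimately show ?thesis
    by (simp add: has_cfrac_def)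
qed

definition alternating_digits :: "(nat \<Rightarrow> nat) \<Rightarrow> bool" where
  "alternating_digits d \<longleftrightarrow> d 0 = 1 \<and> (\<forall>n. d (2 * n + 1) = 1) \<and> (\<forall>n. d (2 * n + 2) \<in> {1, 2})"

lemma alternating_digits_shift:
  assumes "alternating_digits d"
  shows "alternating_digits (case_nat 1 (\<lambda>k. d (k + 3)))"
proof -
  have "d (2 * (n + 1) + 1) = 1" "d (2 * (n + 1) + 2) \<in> {1, 2}" for n
    using assms unfolding alternating_digits_def by blast+
  then show ?thesis
    unfolding alternating_digits_def by (simp add: algebra_simps numeral_eq_Suc)
qed

lemma alternating_cfrac_step:
  assumes "alternating_digits d" and "has_cfrac a d"
  shows "3/2 \<le> a" and "a < 2"
    and "\<exists>a' k. has_cfrac a' (case_nat 1 (\<lambda>k. d (k + 3))) \<and> k \<in> {1, 2} \<and> a = 2 - 1 / (a' + real k)"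
proof -
  have "d 0 = 1" "d (2 * 0 + 1) = 1" "d (2 * 0 + 2) \<in> {1, 2}" "d (2 * 1 + 1) = 1"
    using assms(1) unfolding alternating_digits_def by blast+
  then have d0: "d 0 = 1" and d1: "d 1 = 1" and d2: "d 2 \<in> {1, 2}" and d3: "d 3 = 1"
    by (simp_all add: numeral_2_eq_2 numeral_3_eq_3)
  obtain x1 where x1: "has_cfrac x1 (\<lambda>k. d (Suc k))" "a = real (d 0) + 1 / x1"
    using has_cfrac_tail[OF assms(2)] by auto
  obtain x2 where x2: "has_cfrac x2 (\<lambda>k. d (Suc (Suc k)))" "x1 = real (d 1) + 1 / x2"
    using has_cfrac_tail[OF x1(1)] by auto
  obtain t where t: "has_cfrac t (\<lambda>k. d (k + 3))" "x2 = real (d 2) + 1 / t"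
    using has_cfrac_tail[OF x2(1)] by (auto simp: numeral_eq_Suc)
  have a_eq: "a = 1 + 1 / (1 + 1 / x2)"
    using x1(2) x2(2) d0 d1 by simp
  have "1 \<le> x2"
    using has_cfrac_ge_first[OF x2(1)] d2 by (auto simp: numeral_2_eq_2)
  then show "3/2 \<le> a" "a < 2"
    unfolding a_eq by (simp_all add: field_simps)
  have "has_cfrac (real 1 + 1 / t) (case_nat 1 (\<lambda>k. d (k + 3)))"
    by (rule has_cfrac_Cons[OF t(1)]) (simp add: d3)
  moreover have "a = 2 - 1 / ((1 + 1 / t) + real (d 2))"
    using a_eq t(2) \<open>1 \<le> x2\<close> by (simp add: field_simps)
  ultimately show "\<exists>a' k. has_cfrac a' (case_nat 1 (\<lambda>k. d (k + 3))) \<and> k \<in> {1, 2} \<and> a = 2 - 1 / (a' + real k)"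
    using d2 by auto
qed

lemma descent_identities:
  fixes a a' k m n :: real
  assumes a: "a = 2 - 1 / (a' + k)" and u: "a' + k \<noteq> 0"
  shows "(2 * m - n) * a' - (k * n - (2 * k - 1) * m) = (a' + k) * (m * a - n)"
    and "m * (m * a - n) = (2 * m - n) * ((a' + k) * (m * a - n)) - ((a' + k) * (m * a - n))^2 / (a' + k)"
proof -
  show "(2 * m - n) * a' - (k * n - (2 * k - 1) * m) = (a' + k) * (m * a - n)"
    using u unfolding a by (simp add: field_simps)
  define \<delta> where "\<delta> = m * a - n"
  have "2 * m - n - \<delta> = m / (a' + k)"
    unfolding \<delta>_def a by (simp add: algebra_simps)
  then have "(a' + k) * (2 * m - n - \<delta>) = m"
    using u by simp
  moreover have "(2 * m - n) * ((a' + k) * \<delta>) - ((a' + k) * \<delta>)^2 / (a' + k)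
      = (a' + k) * (2 * m - n - \<delta>) * \<delta>"
    using u by (simp add: power2_eq_square field_simps)
  ultimately show "m * (m * a - n) = (2 * m - n) * ((a' + k) * (m * a - n)) - ((a' + k) * (m * a - n))^2 / (a' + k)"
    unfolding \<delta>_def by simp
qed

lemma descent_preserves_bound:
  fixes u \<delta> p :: real
  assumes "5/2 \<le> u" and "1/3 + (u * \<delta>)^2 / 2 < p"
  shows "1/3 + \<delta>^2 / 2 < p - (u * \<delta>)^2 / u"
proof -
  have "(u - 5/2) * (u + 1/2) \<ge> 0"
    using assms(1) by simp
  then have "u^2 - 2 * u - 1 \<ge> 0"
    by (simp add: power2_eq_square algebra_simps)
  then have "\<delta>^2 * (u^2 - 2 * u - 1) / 2 \<ge> 0"
    by simp
  moreover have "(u * \<delta>)^2 / 2 - (u * \<delta>)^2 / u - \<delta>^2 / 2 = \<delta>^2 * (u^2 - 2 * u - 1) / 2"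
    using assms(1) by (simp add: power2_eq_square field_simps)
  ultimately show ?thesis
    using assms(2) by linarith
qed

lemma half_square_bound:
  fixes d :: real
  assumes "1/2 \<le> d" and "d < 1"
  shows "1/3 + d^2 / 2 < d"
proof -
  have "(d - 1/2) * (1 - d) \<ge> 0"
    using assms by simp
  moreover have "(d - 1/2) * (1 - d) = 3/2 * d - d * d - 1/2"
    by (simp add: field_simps)
  ultimately show ?thesis
    unfolding power2_eq_square using assms by linarith
qed

lemma half_square_bound_mult:
  fixes d m :: real
  assumes "1/4 < d" and "d < 1" and "2 \<le> m"
  shows "1/3 + d^2 / 2 < m * d"
proof -
  have "2 * d \<le> m * d"
    using assms by (simp add: mult_right_mono)
  moreover have "d^2 \<le> d"
    using assms by (simp add: power2_eq_square mult_left_le)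
  ultimately show ?thesis
    using assms(1) by linarith
qed

lemma descent_base_case:
  fixes a :: real and m :: nat and n :: int
  assumes "3/2 \<le> a" and "1 \<le> m" and "n \<le> int m" and "0 \<le> real m * a - n" and "real m * a - n < 1"
  shows "1/3 + (real m * a - n)^2 / 2 < real m * (real m * a - n)"
proof -
  have "real m * (1/2) \<le> real m * (a - 1)"
    using assms(1) by (intro mult_left_mono) auto
  moreover have "real m * (a - 1) < 1"
    using assms(3,5) by (simp add: algebra_simps)
  ultimately have "real m < 2"
    by linarith
  then have "m = 1"
    using assms(2) by simp
  moreover have "real_of_int n > a - 1"
    using assms(5) \<open>m = 1\<close> by simp
  ultimately have "n = 1"
    using assms(1,3) by simp
  then show ?thesis
    using half_square_bound[of "a - 1"] \<open>m = 1\<close> assms(1,5) by simp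
qed

lemma descent_large_step:
  fixes a u :: real and m :: nat and n :: int
  assumes "a < 2" and "1 \<le> m" and "int m < n" and "0 \<le> real m * a - n" and "real m * a - n < 1"
    and "u < 4" and "1 \<le> u * (real m * a - n)"
  shows "1/3 + (real m * a - n)^2 / 2 < real m * (real m * a - n)"
proof -
  define \<delta> where "\<delta> = real m * a - n"
  have \<delta>: "0 \<le> \<delta>" "1 \<le> u * \<delta>"
    using assms(4,7) unfolding \<delta>_def by simp_all
  then have "0 < \<delta>"
    by (cases "\<delta> = 0") auto
  then have "u * \<delta> < 4 * \<delta>"
    using assms(6) by simp
  then have "1/4 < \<delta>"
    using \<delta>(2) by linarith
  moreover have "m \<noteq> 1"
    using assms(1,3,4) by auto
  ultimately show ?thesis
    using half_square_bound_mult[of \<delta> "real m"] assms(2,5) unfolding \<delta>_def by simp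
qed

lemma descent_bound:
  fixes S :: "real set" and m :: nat and n :: int
  assumes S: "\<And>a. a \<in> S \<Longrightarrow> 3/2 \<le> a \<and> a < 2 \<and> (\<exists>a'\<in>S. \<exists>k\<in>{1, 2::nat}. a = 2 - 1 / (a' + real k))"
    and "a \<in> S" and "1 \<le> m" and "0 \<le> real m * a - n" and "real m * a - n < 1"
  shows "1/3 + (real m * a - n)^2 / 2 < real m * (real m * a - n)"
  using assms(2-)
proof (induction m arbitrary: a n rule: less_induct)
  case (less m)
  define \<delta> where "\<delta> = real m * a - n"
  obtain a' k where a: "3/2 \<le> a" "a < 2" and a': "a' \<in> S" and k: "k \<in> {1, 2::nat}"
    and a_eq: "a = 2 - 1 / (a' + real k)"
    using S[OF less.prems(1)] by blast
  have "3/2 \<le> a'" "a' < 2"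
    using S[OF a'] by auto
  define u where "u = a' + real k"
  have u: "5/2 \<le> u" "u < 4"
    using \<open>3/2 \<le> a'\<close> \<open>a' < 2\<close> k unfolding u_def by auto
  have \<delta>: "0 \<le> \<delta>" "\<delta> < 1"
    using less.prems unfolding \<delta>_def by auto
  show ?case
  proof (cases "n \<le> int m")
    case True
    then show ?thesis
      using descent_base_case a less.prems by blast
  next
    case False
    define m' where "m' = 2 * int m - n"
    define n' where "n' = int k * n - (2 * int k - 1) * int m"
    have \<delta>': "real_of_int m' * a' - real_of_int n' = u * \<delta>"
      and m\<delta>: "real m * \<delta> = real_of_int m' * (u * \<delta>) - (u * \<delta>)^2 / u"
      using descent_identities[OF a_eq, of "real m" "real_of_int n"] u
      unfolding \<delta>_def u_def m'_def n'_def by simp_all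
    have "real_of_int n \<le> real m * a"
      using \<delta> unfolding \<delta>_def by simp
    also have "\<dots> < real m * 2"
      using a less.prems(2) by (intro mult_strict_left_mono) auto
    finally have m': "1 \<le> m'" "m' < int m"
      using False unfolding m'_def by linarith+
    show ?thesis
    proof (cases "u * \<delta> < 1")
      case True
      have "1/3 + (u * \<delta>)^2 / 2 < real (nat m') * (u * \<delta>)"
        using less.IH[of "nat m'" a' n'] m' a' True \<delta> u \<delta>' by simp
      then show ?thesis
        using descent_preserves_bound[OF u(1)] m\<delta> m' unfolding \<delta>_def by simp
    next
      case False
      then show ?thesis
        using descent_large_step[of a m n u] a(2) u(2) less.prems \<open>\<not> n \<le> int m\<close>
        unfolding \<delta>_def by simp
    qed
  qed
qed

lemma tan_ge_self:
  assumes "0 \<le> x" and "x < pi / 2"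
  shows "x \<le> tan x"
proof -
  have "arctan (tan x) = x"
    using assms by (intro arctan_tan) auto
  then show ?thesis
    using arctan_le_self[OF tan_pos_pi2_le[OF assms]] by simp
qed

theorem lemma5p4:
  fixes c :: "nat \<Rightarrow> nat" and \<gamma> :: real
  assumes "c 0 = 0" and "c 1 = 1"
    and "\<And>n. n \<ge> 1 \<Longrightarrow> c (2 * n) = 1"
    and "\<And>n. n \<ge> 1 \<Longrightarrow> c (2 * n + 1) \<in> {1, 2}"
    and "has_cfrac \<gamma> c"
  shows "\<forall>m::nat. m \<ge> 1 \<longrightarrow>
    2 / pi * real m * tan (pi / 2 * (real m / \<gamma> - of_int \<lfloor>real m / \<gamma>\<rfloor>)) > 1 / 3"
proof (intro allI impI)
  fix m :: nat
  assume "m \<ge> 1"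
  obtain a where a: "has_cfrac a (\<lambda>k. c (Suc k))" and "\<gamma> = 1 / a"
    using has_cfrac_tail[OF assms(5)] assms(1) by auto
  then have m_div: "real m / \<gamma> = real m * a"
    by simp
  have "alternating_digits (\<lambda>k. c (Suc k))"
    using assms(2) assms(3)[of "Suc _"] assms(4)[of "Suc _"]
    unfolding alternating_digits_def by (simp add: algebra_simps)
  define S where "S = {a. \<exists>d. alternating_digits d \<and> has_cfrac a d}"
  have S_step: "3/2 \<le> b \<and> b < 2 \<and> (\<exists>b'\<in>S. \<exists>k\<in>{1, 2::nat}. b = 2 - 1 / (b' + real k))" if "b \<in> S" for b
    using that alternating_cfrac_step alternating_digits_shift unfolding S_def by blast
  define \<delta> where "\<delta> = real m / \<gamma> - of_int \<lfloor>real m / \<gamma>\<rfloor>"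
  have \<delta>: "0 \<le> \<delta>" "\<delta> < 1"
    unfolding \<delta>_def by linarith+
  have "1/3 + \<delta>^2 / 2 < real m * \<delta>"
    using descent_bound[OF S_step, of a m "\<lfloor>real m / \<gamma>\<rfloor>"] \<delta> a \<open>alternating_digits _\<close> \<open>m \<ge> 1\<close>
    unfolding \<delta>_def m_div S_def by blast
  moreover have "real m * \<delta> \<le> 2 / pi * real m * tan (pi / 2 * \<delta>)"
    using tan_ge_self[of "pi / 2 * \<delta>"] \<delta> mult_left_mono[of "pi / 2 * \<delta>" "tan (pi / 2 * \<delta>)" "2 / pi * real m"]
    by (simp add: field_simps)
  moreover have "0 \<le> \<delta>^2 / 2"
    by simp
  ultimately show "2 / pi * real m * tan (pi / 2 * (real m / \<gamma> - of_int \<lfloor>real m / \<gamma>\<rfloor>)) > 1 / 3"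
    unfolding \<delta>_def[symmetric] by linarith
qed

end
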